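(* Let $G=(V,E)$ be a connected undirected graph (parallel edges allowed) with reactances $r_e>0$ and admittance matrix $\mathbf{A}$, let $\vec{\theta}\in\mathbb{R}^V$ and $\vec{p}=\mathbf{A}\vec{\theta}$. Let $H=(V_H,E_H)$ be a subgraph of $G$, let $F\subseteq E_H$, let $\mathbf{A}'$ be the admittance matrix of $G'=(V,E\setminus F)$ (assumed connected), and let $\vec{\theta}'\in\mathbb{R}^V$ satisfy $\mathbf{A}'\vec{\theta}'=\vec{p}$. Suppose a data distortion attack: the observed vector $\vec{\theta}^{\star}\in\mathbb{R}^V$ satisfies $\theta^{\star}_v=\theta'_v$ for $v\in V\setminus V_H$ and $\vec{\theta}^{\star}_H=\vec{\theta}'_H+\vec{z}$, where $\vec{z}$ is a random vector in $\mathbb{R}^{V_H}$ whose distribution has no positive probability mass on any proper linear subspace. Then for every $i\in\mathrm{int}(\bar H)$, $\mathbf{A}_i\vec{\theta}^{\star}=p_i$.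
   Context: Admittance matrix: for $u\neq v$, $a_{uv}=-\sum_e 1/r_e$ over edges $e$ joining $u,v$ ($0$ if none), $a_{uu}=-\sum_{w\neq u}a_{uw}$; $\mathbf{A}_i$ is the $i$-th row. $\bar H$ denotes the subgraph of $G$ induced by $V\setminus V_H$; $\vec{\theta}_H$ denotes the restriction of $\vec{\theta}$ to $V_H$. For a subgraph $S$ of $G$ with node set $V_S$, $\mathrm{int}(S)=\{i\in V_S: N(i)\subseteq V_S\}$, where $N(i)$ is the set of neighbors of $i$ in $G$. *)

theory Defs
  imports "HOL-Probability.Probability"
begin

definition joins :: "('e \<Rightarrow> 'v \<times> 'v) \<Rightarrow> 'e \<Rightarrow> 'v \<Rightarrow> 'v \<Rightarrow> bool" where
  "joins ends e u v \<longleftrightarrow> ends e = (u, v) \<or> ends e = (v, u)"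

definition wf_graph :: "'v set \<Rightarrow> 'e set \<Rightarrow> ('e \<Rightarrow> 'v \<times> 'v) \<Rightarrow> bool" where
  "wf_graph V E ends \<longleftrightarrow> finite V \<and> finite E \<and>
     (\<forall>e\<in>E. fst (ends e) \<in> V \<and> snd (ends e) \<in> V)"

definition adjacent :: "'e set \<Rightarrow> ('e \<Rightarrow> 'v \<times> 'v) \<Rightarrow> 'v \<Rightarrow> 'v \<Rightarrow> bool" where
  "adjacent E ends u v \<longleftrightarrow> u \<noteq> v \<and> (\<exists>e\<in>E. joins ends e u v)"

definition neighbors :: "'e set \<Rightarrow> ('e \<Rightarrow> 'v \<times> 'v) \<Rightarrow> 'v \<Rightarrow> 'v set" where
  "neighbors E ends i = {j. adjacent E ends i j}"

definition graph_connected :: "'v set \<Rightarrow> 'e set \<Rightarrow> ('e \<Rightarrow> 'v \<times> 'v) \<Rightarrow> bool" where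
  "graph_connected V E ends \<longleftrightarrow>
     (\<forall>u\<in>V. \<forall>v\<in>V. (u, v) \<in> {(x, y). adjacent E ends x y}\<^sup>*)"

definition adm_off :: "'e set \<Rightarrow> ('e \<Rightarrow> 'v \<times> 'v) \<Rightarrow> ('e \<Rightarrow> real) \<Rightarrow> 'v \<Rightarrow> 'v \<Rightarrow> real" where
  "adm_off E ends r u v = - (\<Sum>e\<in>{e\<in>E. joins ends e u v}. 1 / r e)"

definition admittance :: "'v set \<Rightarrow> 'e set \<Rightarrow> ('e \<Rightarrow> 'v \<times> 'v) \<Rightarrow> ('e \<Rightarrow> real) \<Rightarrow> 'v \<Rightarrow> 'v \<Rightarrow> real" where
  "admittance V E ends r u v =
     (if u \<noteq> v then adm_off E ends r u v
      else - (\<Sum>w\<in>V - {u}. adm_off E ends r u w))"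

definition row_apply :: "'v set \<Rightarrow> ('v \<Rightarrow> 'v \<Rightarrow> real) \<Rightarrow> 'v \<Rightarrow> ('v \<Rightarrow> real) \<Rightarrow> real" where
  "row_apply V A i \<theta> = (\<Sum>j\<in>V. A i j * \<theta> j)"

definition interior_nodes :: "'e set \<Rightarrow> ('e \<Rightarrow> 'v \<times> 'v) \<Rightarrow> 'v set \<Rightarrow> 'v set" where
  "interior_nodes E ends VS = {i\<in>VS. neighbors E ends i \<subseteq> VS}"

text \<open>R^{V_H}, represented as functions vanishing outside V_H, and its linear subspaces.\<close>
definition coord_space :: "'v set \<Rightarrow> ('v \<Rightarrow> real) set" where
  "coord_space VH = {f. \<forall>v. v \<notin> VH \<longrightarrow> f v = 0}"

definition lin_subspace :: "('v \<Rightarrow> real) set \<Rightarrow> bool" where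
  "lin_subspace S \<longleftrightarrow> (\<lambda>_. 0) \<in> S \<and> (\<forall>x\<in>S. \<forall>y\<in>S. (\<lambda>v. x v + y v) \<in> S) \<and>
     (\<forall>c. \<forall>x\<in>S. (\<lambda>v. c * x v) \<in> S)"

end

theory Submission
  imports Defs
begin

(* Row i of the admittance matrix only involves the edges at i and the values of theta
  on the closed neighbourhood of i. For i in the interior of the complement of V_H both
  are untouched by the attack: the removed edges F lie inside V_H, so row i of A and of A'
  agree, and theta* coincides with theta' on the neighbourhood of i. Hence
  A_i theta* = A'_i theta' = p_i for every outcome of z. *)

lemma adm_off_remove_edges_away:
  assumes "\<forall>e\<in>F. fst (ends e) \<noteq> i \<and> snd (ends e) \<noteq> i"
  shows "adm_off (E - F) ends r i j = adm_off E ends r i j"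
proof -
  have "{e\<in>E - F. joins ends e i j} = {e\<in>E. joins ends e i j}"
    using assms by (auto simp: joins_def)
  then show ?thesis
    by (simp add: adm_off_def)
qed

lemma admittance_remove_edges_away:
  assumes "\<forall>e\<in>F. fst (ends e) \<noteq> i \<and> snd (ends e) \<noteq> i"
  shows "admittance V (E - F) ends r i = admittance V E ends r i"
proof -
  have "adm_off (E - F) ends r i = adm_off E ends r i"
    using adm_off_remove_edges_away[OF assms] by blast
  then show ?thesis
    unfolding admittance_def by (rule arg_cong)
qed

lemma admittance_not_adjacent:
  assumes "i \<noteq> j" and "\<not> adjacent E ends i j"
  shows "admittance V E ends r i j = 0"
proof -
  have "{e\<in>E. joins ends e i j} = {}"
    using assms by (auto simp: adjacent_def)
  then show ?thesis
    using assms(1) unfolding admittance_def adm_off_def by (simp only: if_True sum.empty) simp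
qed

lemma row_apply_admittance_local:
  assumes "\<forall>j\<in>V. j = i \<or> adjacent E ends i j \<longrightarrow> \<theta>\<^sub>1 j = \<theta>\<^sub>2 j"
  shows "row_apply V (admittance V E ends r) i \<theta>\<^sub>1 = row_apply V (admittance V E ends r) i \<theta>\<^sub>2"
  unfolding row_apply_def
proof (rule sum.cong[OF refl])
  fix j assume "j \<in> V"
  then show "admittance V E ends r i j * \<theta>\<^sub>1 j = admittance V E ends r i j * \<theta>\<^sub>2 j"
    using assms admittance_not_adjacent[of i j E ends V r] by (cases "j = i \<or> adjacent E ends i j") auto
qed

theorem lemma5p1:
  fixes V :: "'v set" and E :: "'e set" and ends :: "'e \<Rightarrow> 'v \<times> 'v" and r :: "'e \<Rightarrow> real"
    and \<theta> \<theta>' p :: "'v \<Rightarrow> real" and VH :: "'v set" and EH F :: "'e set"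
    and M :: "'w measure" and z :: "'w \<Rightarrow> 'v \<Rightarrow> real" and \<theta>s :: "'w \<Rightarrow> 'v \<Rightarrow> real"
  assumes G: "wf_graph V E ends" and conn: "graph_connected V E ends"
    and r_pos: "\<forall>e\<in>E. r e > 0"
    and p_def: "\<forall>i\<in>V. p i = row_apply V (admittance V E ends r) i \<theta>"
    and H: "VH \<subseteq> V" "EH \<subseteq> E" "\<forall>e\<in>EH. fst (ends e) \<in> VH \<and> snd (ends e) \<in> VH"
    and F: "F \<subseteq> EH"
    and conn': "graph_connected V (E - F) ends"
    and \<theta>': "\<forall>i\<in>V. row_apply V (admittance V (E - F) ends r) i \<theta>' = p i"
    and M: "prob_space M"
    and z_range: "\<forall>\<omega>\<in>space M. z \<omega> \<in> coord_space VH"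
    and z_distr: "\<forall>S. lin_subspace S \<and> S \<subseteq> coord_space VH \<and> S \<noteq> coord_space VH
                    \<longrightarrow> measure M {\<omega>\<in>space M. z \<omega> \<in> S} = 0"
    and attack_out: "\<forall>\<omega>\<in>space M. \<forall>v\<in>V - VH. \<theta>s \<omega> v = \<theta>' v"
    and attack_in: "\<forall>\<omega>\<in>space M. \<forall>v\<in>VH. \<theta>s \<omega> v = \<theta>' v + z \<omega> v"
  shows "\<forall>\<omega>\<in>space M. \<forall>i\<in>interior_nodes E ends (V - VH).
           row_apply V (admittance V E ends r) i (\<theta>s \<omega>) = p i"
proof (intro ballI)
  fix \<omega> i
  assume \<omega>: "\<omega> \<in> space M" and i: "i \<in> interior_nodes E ends (V - VH)"
  then have iV: "i \<in> V - VH" and nbhd: "neighbors E ends i \<subseteq> V - VH"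
    by (auto simp: interior_nodes_def)
  have F_away: "\<forall>e\<in>F. fst (ends e) \<noteq> i \<and> snd (ends e) \<noteq> i"
    using F H(3) iV by blast
  have agree: "\<forall>j\<in>V. j = i \<or> adjacent E ends i j \<longrightarrow> \<theta>s \<omega> j = \<theta>' j"
    using attack_out \<omega> iV nbhd by (auto simp: neighbors_def)
  have "row_apply V (admittance V E ends r) i (\<theta>s \<omega>)
      = row_apply V (admittance V E ends r) i \<theta>'"
    using row_apply_admittance_local[OF agree] .
  also have "\<dots> = row_apply V (admittance V (E - F) ends r) i \<theta>'"
    using admittance_remove_edges_away[OF F_away] by (simp add: row_apply_def)
  also have "\<dots> = p i"
    using \<theta>' iV by simp
  finally show "row_apply V (admittance V E ends r) i (\<theta>s \<omega>) = p i" .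
qed

end
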